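(* Let $\mathscr{F}$ be a family of languages closed under product, union, Kleene closure and (left and right) division by finite [respectively, regular] languages. Let $S$ be a semigroup, let $\sigma : X^+ \to S$ be a choice of generators for $S$, and suppose that $L_\sigma(S) \in \mathscr{F}$. If $T$ is a finite [respectively, rational] ideal of $S$, then $L_{\sigma/T}(S/T) \in \mathscr{F}$.
   Context: For a semigroup $S$, $S^1$ denotes the monoid obtained by adjoining a new identity $1$ (even if $S$ already has one). A choice of generators for $S$ is a surjective morphism $\sigma : X^+ \to S$ from a free semigroup; it extends uniquely to $\sigma^1 : X^* \to S^1$. Let $\overline{X} = \{\overline{x} : x \in X\}$ be a set of formal inverses, $\hat{X} = X \cup \overline{X}$, with the involution $\overline{\overline{x}} = x$ and $\overline{x_1\cdots x_n} = \overline{x_n}\cdots\overline{x_1}$. The loop automaton of $S$ with respect to $\sigma$ is the directed labelled graph with vertex set $S^1$, having for each $a \in S^1$ and $x \in X$ an edge from $a$ to $a(x\sigma)$ labelled $x$ and an edge from $a(x\sigma)$ to $a$ labelled $\overline{x}$. The loop problem $L_\sigma(S) \subseteq \hat{X}^*$ is the set of words labelling paths from $1$ to $1$ in this graph (including the empty word). An ideal of $S$ is a subsemigroup $T$ with $S T \cup T S \subseteq T$. The Rees quotient $S/T$ has elements $(S\setminus T) \cup \{0\}$, with product equal to the $S$-product when that product lies outside $T$ and both factors are nonzero, and $0$ otherwise. The map $S \to S/T$ sending $s \notin T$ to $s$ and $s \in T$ to $0$ is a surjective morphism; composing $\sigma$ with it gives a choice of generators $\sigma/T : X^+ \to S/T$.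 A subset of $S$ is rational if it is the image of a regular language under a morphism from a finitely generated free monoid to $S$; a rational ideal is a rational subset which is an ideal. For languages $L, K$, division means $L K^{-1} = \{w : wk \in L \text{ for some } k \in K\}$ and $K^{-1}L = \{w : kw \in L \text{ for some } k \in K\}$. *)

theory Defs
  imports Main
begin

definition lang_conc :: "'a list set \<Rightarrow> 'a list set \<Rightarrow> 'a list set" where
  "lang_conc A B = {u @ v | u v. u \<in> A \<and> v \<in> B}"

inductive_set lang_star :: "'a list set \<Rightarrow> 'a list set" for A where
  star_Nil: "[] \<in> lang_star A"
| star_app: "u \<in> A \<Longrightarrow> v \<in> lang_star A \<Longrightarrow> u @ v \<in> lang_star A"

text \<open>Right division  L K^{-1} and left division K^{-1} L.\<close>
definition rdiv :: "'a list set \<Rightarrow> 'a list set \<Rightarrow> 'a list set" where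
  "rdiv L K = {w. \<exists>k\<in>K. w @ k \<in> L}"

definition ldiv :: "'a list set \<Rightarrow> 'a list set \<Rightarrow> 'a list set" where
  "ldiv K L = {w. \<exists>k\<in>K. k @ w \<in> L}"

inductive regular :: "'a list set \<Rightarrow> bool" where
  reg_finite: "finite L \<Longrightarrow> regular L"
| reg_union: "regular A \<Longrightarrow> regular B \<Longrightarrow> regular (A \<union> B)"
| reg_conc: "regular A \<Longrightarrow> regular B \<Longrightarrow> regular (lang_conc A B)"
| reg_star: "regular A \<Longrightarrow> regular (lang_star A)"

definition closed_rat_ops :: "'a list set set \<Rightarrow> bool" where
  "closed_rat_ops F \<longleftrightarrow>
     (\<forall>L\<in>F. \<forall>K\<in>F. lang_conc L K \<in> F \<and> L \<union> K \<in> F) \<and> (\<forall>L\<in>F. lang_star L \<in> F)"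

definition closed_div_by :: "('a list set \<Rightarrow> bool) \<Rightarrow> 'a list set set \<Rightarrow> bool" where
  "closed_div_by P F \<longleftrightarrow> (\<forall>L\<in>F. \<forall>K. P K \<longrightarrow> rdiv L K \<in> F \<and> ldiv K L \<in> F)"

definition semigroup_on :: "'s set \<Rightarrow> ('s \<Rightarrow> 's \<Rightarrow> 's) \<Rightarrow> bool" where
  "semigroup_on S mul \<longleftrightarrow> (\<forall>a\<in>S. \<forall>b\<in>S. mul a b \<in> S) \<and>
     (\<forall>a\<in>S. \<forall>b\<in>S. \<forall>c\<in>S. mul (mul a b) c = mul a (mul b c))"

text \<open>The monoid S^1: None is the adjoined identity 1.\<close>
definition one_carrier :: "'s set \<Rightarrow> 's option set" where
  "one_carrier S = insert None (Some ` S)"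

fun one_mul :: "('s \<Rightarrow> 's \<Rightarrow> 's) \<Rightarrow> 's option \<Rightarrow> 's option \<Rightarrow> 's option" where
  "one_mul mul None b = b"
| "one_mul mul (Some a) None = Some a"
| "one_mul mul (Some a) (Some b) = Some (mul a b)"

text \<open>The morphism sigma^1 : X^* \<rightarrow> S^1 induced by the images g x of the letters
  (the generating set X is the type 'x).\<close>
definition sigma1 :: "('s \<Rightarrow> 's \<Rightarrow> 's) \<Rightarrow> ('x \<Rightarrow> 's) \<Rightarrow> 'x list \<Rightarrow> 's option" where
  "sigma1 mul g w = foldr (\<lambda>x acc. one_mul mul (Some (g x)) acc) w None"

definition choice_of_generators :: "'s set \<Rightarrow> ('s \<Rightarrow> 's \<Rightarrow> 's) \<Rightarrow> ('x \<Rightarrow> 's) \<Rightarrow> bool" where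
  "choice_of_generators S mul g \<longleftrightarrow> (\<forall>x. g x \<in> S) \<and>
     Some ` S = sigma1 mul g ` {w. w \<noteq> []}"

text \<open>Letters of X-hat: (x, True) is x, (x, False) is its formal inverse.\<close>
fun loop_edge :: "'s set \<Rightarrow> ('s \<Rightarrow> 's \<Rightarrow> 's) \<Rightarrow> ('x \<Rightarrow> 's)
    \<Rightarrow> 's option \<Rightarrow> 'x \<times> bool \<Rightarrow> 's option \<Rightarrow> bool" where
  "loop_edge S mul g a (x, True) b \<longleftrightarrow> a \<in> one_carrier S \<and> b = one_mul mul a (Some (g x))"
| "loop_edge S mul g a (x, False) b \<longleftrightarrow> b \<in> one_carrier S \<and> a = one_mul mul b (Some (g x))"

fun loop_path :: "'s set \<Rightarrow> ('s \<Rightarrow> 's \<Rightarrow> 's) \<Rightarrow> ('x \<Rightarrow> 's)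
    \<Rightarrow> 's option \<Rightarrow> ('x \<times> bool) list \<Rightarrow> 's option \<Rightarrow> bool" where
  "loop_path S mul g a [] b \<longleftrightarrow> a = b \<and> a \<in> one_carrier S"
| "loop_path S mul g a (l # w) b \<longleftrightarrow> (\<exists>c. loop_edge S mul g a l c \<and> loop_path S mul g c w b)"

definition loop_problem :: "'s set \<Rightarrow> ('s \<Rightarrow> 's \<Rightarrow> 's) \<Rightarrow> ('x \<Rightarrow> 's) \<Rightarrow> ('x \<times> bool) list set" where
  "loop_problem S mul g = {w. loop_path S mul g None w None}"

definition semigroup_ideal :: "'s set \<Rightarrow> ('s \<Rightarrow> 's \<Rightarrow> 's) \<Rightarrow> 's set \<Rightarrow> bool" where
  "semigroup_ideal S mul T \<longleftrightarrow> T \<subseteq> S \<and> (\<forall>a\<in>T. \<forall>b\<in>T. mul a b \<in> T) \<and>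
     (\<forall>s\<in>S. \<forall>t\<in>T. mul s t \<in> T \<and> mul t s \<in> T)"

text \<open>Rees quotient S/T: Some s for s \<in> S - T, and None is the zero.\<close>
definition rees_carrier :: "'s set \<Rightarrow> 's set \<Rightarrow> 's option set" where
  "rees_carrier S T = insert None (Some ` (S - T))"

fun rees_mul :: "('s \<Rightarrow> 's \<Rightarrow> 's) \<Rightarrow> 's set \<Rightarrow> 's option \<Rightarrow> 's option \<Rightarrow> 's option" where
  "rees_mul mul T (Some a) (Some b) = (if mul a b \<in> T then None else Some (mul a b))"
| "rees_mul mul T _ _ = None"

definition rees_map :: "'s set \<Rightarrow> 's \<Rightarrow> 's option" where
  "rees_map T s = (if s \<in> T then None else Some s)"

definition rees_gen :: "'s set \<Rightarrow> ('x \<Rightarrow> 's) \<Rightarrow> 'x \<Rightarrow> 's option" where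
  "rees_gen T g x = rees_map T (g x)"

definition rational_subset :: "'s set \<Rightarrow> ('s \<Rightarrow> 's \<Rightarrow> 's) \<Rightarrow> 's set \<Rightarrow> bool" where
  "rational_subset S mul T \<longleftrightarrow>
     (\<exists>(A::nat set) (f::nat \<Rightarrow> 's option) (L::nat list set).
        finite A \<and> (\<forall>a\<in>A. f a \<in> one_carrier S) \<and> L \<subseteq> lists A \<and> regular L \<and>
        Some ` T = (\<lambda>w. foldr (\<lambda>a acc. one_mul mul (f a) acc) w None) ` L)"

end

theory Submission
  imports Defs
begin

text \<open>A loop at 1 in the loop automaton of \<open>S/T\<close> either avoids the zero, and is then a loop
  of \<open>S\<close>, or it reads a word \<open>u\<close> leading from 1 into \<open>T\<close>, then an arbitrary word (the zero
  absorbs every edge), then a word \<open>v\<close> leading from \<open>T\<close> back to 1. Let \<open>V\<close> be a language of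
  positive words whose values are exactly the elements of \<open>T\<close>; it is finite if \<open>T\<close> is finite and
  regular if \<open>T\<close> is rational. With \<open>L = L\<^sub>\<sigma>(S)\<close>, the words \<open>u\<close> form \<open>A = L W\<^sup>-\<^sup>1\<close>, where \<open>W\<close> consists of
  the formal inverses of the words of \<open>V\<close>, and the words \<open>v\<close> form \<open>V\<^sup>-\<^sup>1 L\<close>. If \<open>T\<close> is nonempty, every letter lies
  in \<open>V\<^sup>-\<^sup>1 A\<close>, so \<open>(V\<^sup>-\<^sup>1 A)\<^sup>*\<close> is the set of all words and
  \<open>L\<^bsub>\<sigma>/T\<^esub>(S/T) = L \<union> A (V\<^sup>-\<^sup>1 A)\<^sup>* (V\<^sup>-\<^sup>1 L)\<close> is obtained from \<open>L\<close> by the allowed operations.\<close>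

definition inv_letter :: "'x \<times> bool \<Rightarrow> 'x \<times> bool" where
  "inv_letter l = (fst l, \<not> snd l)"

definition inv_word :: "('x \<times> bool) list \<Rightarrow> ('x \<times> bool) list" where
  "inv_word w = rev (map inv_letter w)"

lemma inv_word_simps [simp]:
  "inv_word [] = []"
  "inv_word (l # w) = inv_word w @ [inv_letter l]"
  "inv_word (u @ v) = inv_word v @ inv_word u"
  "inv_word (inv_word w) = w"
  by (auto simp: inv_word_def inv_letter_def rev_map[symmetric] comp_def)

definition pos_word :: "'x list \<Rightarrow> ('x \<times> bool) list" where
  "pos_word xs = map (\<lambda>x. (x, True)) xs"

lemma lang_star_conv_concat: "lang_star A = concat ` lists A"
proof (intro set_eqI iffI)
  fix w assume "w \<in> lang_star A"
  then show "w \<in> concat ` lists A"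
  proof induction
    case star_Nil
    show ?case by (metis concat.simps(1) image_eqI lists.Nil)
  next
    case (star_app u v)
    then obtain ws where "v = concat ws" "ws \<in> lists A" by blast
    with star_app(1) show ?case by (auto intro!: image_eqI[of _ _ "u # ws"])
  qed
next
  fix w assume "w \<in> concat ` lists A"
  then obtain ws where "w = concat ws" "ws \<in> lists A" by blast
  then show "w \<in> lang_star A"
    by (induction ws arbitrary: w) (auto intro: lang_star.intros)
qed

lemma lang_star_eq_UNIV: "(\<And>l. [l] \<in> A) \<Longrightarrow> lang_star A = UNIV"
  unfolding lang_star_conv_concat
  by (auto intro!: image_eqI[of _ _ "map (\<lambda>l. [l]) w" for w])

lemma lang_conc_empty [simp]: "lang_conc {} B = {}"
  by (simp add: lang_conc_def)

lemma image_lang_conc_morphism: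
  assumes "\<And>u v. h (u @ v) = h u @ h v"
  shows "h ` lang_conc A B = lang_conc (h ` A) (h ` B)"
  unfolding lang_conc_def image_def using assms by auto metis+

lemma image_lang_star_morphism:
  assumes "h [] = []" and "\<And>u v. h (u @ v) = h u @ h v"
  shows "h ` lang_star A = lang_star (h ` A)"
proof -
  have "h (concat ws) = concat (map h ws)" for ws
    by (induction ws) (simp_all add: assms)
  then have "h ` concat ` lists A = concat ` map h ` lists A"
    by (simp add: image_image)
  then show ?thesis
    by (simp add: lang_star_conv_concat lists_image)
qed

lemma image_rev_lang_conc: "rev ` lang_conc A B = lang_conc (rev ` B) (rev ` A)"
  unfolding lang_conc_def image_def by auto (metis rev_append rev_rev_ident)+

lemma image_rev_lang_star: "rev ` lang_star A = lang_star (rev ` A)"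
proof -
  have "rev ` lists A = lists A"
    by (auto intro: image_eqI[of _ _ "rev ws" for ws])
  then have "rev ` concat ` lists A = concat ` map rev ` lists A"
    by (metis (no_types, lifting) image_cong image_image rev_concat)
  then show ?thesis
    by (simp add: lang_star_conv_concat lists_image)
qed

lemma regular_image_morphism:
  assumes "regular L" and "h [] = []" and "\<And>u v. h (u @ v) = h u @ h v"
  shows "regular (h ` L)"
  using assms(1)
proof induction
  case (reg_conc A B)
  then show ?case by (simp add: image_lang_conc_morphism assms(3) regular.reg_conc)
next
  case (reg_star A)
  then show ?case by (simp add: image_lang_star_morphism assms(2,3) regular.reg_star)
qed (auto simp: image_Un intro: regular.intros)

lemma regular_image_rev: "regular L \<Longrightarrow> regular (rev ` L)"
  by (induction rule: regular.induct)
    (auto simp: image_Un image_rev_lang_conc image_rev_lang_star intro: regular.intros)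

lemma regular_image_inv_word: "regular L \<Longrightarrow> regular (inv_word ` L)"
proof -
  assume "regular L"
  moreover have "inv_word ` L = map inv_letter ` rev ` L"
    by (auto simp: inv_word_def rev_map image_image)
  ultimately show ?thesis
    by (simp add: regular_image_morphism regular_image_rev)
qed

lemma None_in_one_carrier [simp]: "None \<in> one_carrier S"
  by (simp add: one_carrier_def)

locale loop_automaton =
  fixes S :: "'s set" and mul :: "'s \<Rightarrow> 's \<Rightarrow> 's" and g :: "'x \<Rightarrow> 's"
  assumes mul_gen_closed: "a \<in> one_carrier S \<Longrightarrow> one_mul mul a (Some (g x)) \<in> one_carrier S"
begin

lemma loop_edge_ends:
  "loop_edge S mul g a l c \<Longrightarrow> a \<in> one_carrier S \<and> c \<in> one_carrier S"
  by (cases l; cases "snd l") (auto simp: mul_gen_closed)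

lemma loop_path_ends:
  "loop_path S mul g a w b \<Longrightarrow> a \<in> one_carrier S \<and> b \<in> one_carrier S"
  by (induction w arbitrary: a) (auto dest: loop_edge_ends)

lemma loop_path_append:
  "loop_path S mul g a (u @ v) c \<longleftrightarrow> (\<exists>b. loop_path S mul g a u b \<and> loop_path S mul g b v c)"
  by (induction u arbitrary: a) (auto dest: loop_path_ends)

lemma loop_path_single:
  "loop_path S mul g a [l] b \<longleftrightarrow> loop_edge S mul g a l b"
  by (auto dest: loop_edge_ends)

lemma loop_edge_inv_letter:
  "loop_edge S mul g a l b \<Longrightarrow> loop_edge S mul g b (inv_letter l) a"
  by (cases l; cases "snd l") (auto simp: inv_letter_def mul_gen_closed)

lemma loop_path_inv_word_if:
  "loop_path S mul g a w b \<Longrightarrow> loop_path S mul g b (inv_word w) a"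
  by (induction w arbitrary: a)
    (fastforce simp: loop_path_append loop_path_single intro: loop_edge_inv_letter dest: loop_edge_ends)+

lemma loop_path_inv_word:
  "loop_path S mul g b (inv_word w) a \<longleftrightarrow> loop_path S mul g a w b"
  using loop_path_inv_word_if[of a w b] loop_path_inv_word_if[of b "inv_word w" a] by auto

end

lemma one_mul_None_right [simp]: "one_mul mul a None = a"
  by (cases a) auto

lemma sigma1_simps [simp]:
  "sigma1 mul g [] = None"
  "sigma1 mul g (x # w) = one_mul mul (Some (g x)) (sigma1 mul g w)"
  by (simp_all add: sigma1_def)

locale generated_semigroup =
  fixes S :: "'s set" and mul :: "'s \<Rightarrow> 's \<Rightarrow> 's" and g :: "'x \<Rightarrow> 's"
  assumes semigroup: "semigroup_on S mul"
    and generators: "choice_of_generators S mul g"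
begin

lemma gen_in_carrier: "g x \<in> S"
  using generators by (simp add: choice_of_generators_def)

lemma mul_closed: "a \<in> S \<Longrightarrow> b \<in> S \<Longrightarrow> mul a b \<in> S"
  using semigroup by (simp add: semigroup_on_def)

lemma mul_assoc: "a \<in> S \<Longrightarrow> b \<in> S \<Longrightarrow> c \<in> S \<Longrightarrow> mul (mul a b) c = mul a (mul b c)"
  using semigroup by (simp add: semigroup_on_def)

lemma one_mul_closed:
  "a \<in> one_carrier S \<Longrightarrow> b \<in> one_carrier S \<Longrightarrow> one_mul mul a b \<in> one_carrier S"
  by (cases a; cases b) (auto simp: one_carrier_def mul_closed)

lemma one_mul_assoc:
  "a \<in> one_carrier S \<Longrightarrow> b \<in> one_carrier S \<Longrightarrow> c \<in> one_carrier S \<Longrightarrow>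
    one_mul mul (one_mul mul a b) c = one_mul mul a (one_mul mul b c)"
  by (cases a; cases b; cases c) (auto simp: one_carrier_def mul_assoc)

lemma gen_in_one_carrier: "Some (g x) \<in> one_carrier S"
  by (simp add: one_carrier_def gen_in_carrier)

sublocale loop_automaton S mul g
  by unfold_locales (simp add: one_mul_closed gen_in_one_carrier)

lemma sigma1_in_one_carrier: "sigma1 mul g w \<in> one_carrier S"
  by (induction w) (simp_all add: one_mul_closed gen_in_one_carrier)

lemma sigma1_append: "sigma1 mul g (u @ v) = one_mul mul (sigma1 mul g u) (sigma1 mul g v)"
  by (induction u) (simp_all add: one_mul_assoc gen_in_one_carrier sigma1_in_one_carrier)

lemma sigma1_surj: "a \<in> one_carrier S \<Longrightarrow> \<exists>w. sigma1 mul g w = a"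
  using generators unfolding choice_of_generators_def one_carrier_def
  by (metis image_iff insert_iff sigma1_simps(1))

lemma loop_path_pos_word:
  "a \<in> one_carrier S \<Longrightarrow>
    loop_path S mul g a (pos_word w) b \<longleftrightarrow> b = one_mul mul a (sigma1 mul g w)"
  by (induction w arbitrary: a)
    (auto simp: pos_word_def mul_gen_closed one_mul_assoc gen_in_one_carrier sigma1_in_one_carrier)

lemma loop_path_pos_word_from_one:
  "loop_path S mul g None (pos_word w) b \<longleftrightarrow> b = sigma1 mul g w"
  by (simp add: loop_path_pos_word)

end

locale rees_quotient = generated_semigroup +
  fixes T :: "'s set"
  assumes ideal: "semigroup_ideal S mul T"
begin

abbreviation "R \<equiv> rees_carrier S T"
abbreviation "rmul \<equiv> rees_mul mul T"
abbreviation "rgen \<equiv> rees_gen T g"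
abbreviation "lift \<equiv> map_option (rees_map T)"

lemma ideal_subset: "T \<subseteq> S"
  using ideal by (simp add: semigroup_ideal_def)

lemma ideal_mul_left: "s \<in> S \<Longrightarrow> t \<in> T \<Longrightarrow> mul s t \<in> T"
  using ideal by (simp add: semigroup_ideal_def)

lemma ideal_mul_right: "t \<in> T \<Longrightarrow> s \<in> S \<Longrightarrow> mul t s \<in> T"
  using ideal by (simp add: semigroup_ideal_def)

sublocale rees: loop_automaton R rmul rgen
proof
  fix a x assume "a \<in> one_carrier R"
  then show "one_mul rmul a (Some (rgen x)) \<in> one_carrier R"
    using gen_in_carrier[of x]
    by (cases a) (auto simp: one_carrier_def rees_carrier_def rees_gen_def rees_map_def mul_closed
        split: if_splits)
qed

lemma lift_in_one_carrier: "a \<in> one_carrier S \<Longrightarrow> lift a \<in> one_carrier R"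
  by (cases a) (auto simp: one_carrier_def rees_carrier_def rees_map_def)

lemma lift_eq_zero_iff: "lift a = Some None \<longleftrightarrow> a \<in> Some ` T"
  by (cases a) (auto simp: rees_map_def)

lemma lift_inj: "a \<notin> Some ` T \<Longrightarrow> b \<notin> Some ` T \<Longrightarrow> lift a = lift b \<Longrightarrow> a = b"
  by (cases a; cases b) (auto simp: rees_map_def split: if_splits)

lemma lift_surj:
  assumes "c' \<in> one_carrier R" and "c' \<noteq> Some None"
  obtains c where "c \<in> one_carrier S" "c \<notin> Some ` T" "c' = lift c"
proof (cases c')
  case None
  then show ?thesis using that[of None] by simp
next
  case (Some r)
  with assms obtain s where "r = Some s" "s \<in> S - T"
    by (auto simp: one_carrier_def rees_carrier_def)
  then show ?thesis using Some that[of "Some s"] by (auto simp: one_carrier_def rees_map_def)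
qed

lemma lift_mul_gen:
  "a \<in> one_carrier S \<Longrightarrow> lift (one_mul mul a (Some (g x))) = one_mul rmul (lift a) (Some (rgen x))"
  using gen_in_carrier[of x]
  by (cases a) (auto simp: one_carrier_def rees_gen_def rees_map_def ideal_mul_left ideal_mul_right)

lemma loop_edge_lift: "loop_edge S mul g a l c \<Longrightarrow> loop_edge R rmul rgen (lift a) l (lift c)"
  by (cases l; cases "snd l") (auto simp: lift_mul_gen lift_in_one_carrier)

lemma loop_path_lift: "loop_path S mul g a w b \<Longrightarrow> loop_path R rmul rgen (lift a) w (lift b)"
  by (induction w arbitrary: a) (auto simp: lift_in_one_carrier dest: loop_edge_lift)

lemma loop_path_zero: "loop_path R rmul rgen (Some None) w (Some None)"
proof -
  have zero: "Some None \<in> one_carrier R"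
    by (simp add: one_carrier_def rees_carrier_def)
  then have "loop_edge R rmul rgen (Some None) l (Some None)" for l
    by (cases l; cases "snd l") auto
  with zero show ?thesis
    by (induction w) auto
qed

text \<open>Only positive edges can enter the zero of \<open>S/T\<close>, since \<open>0 x = 0\<close>.\<close>
lemma loop_edge_from_nonzero:
  assumes a: "a \<in> one_carrier S" "a \<notin> Some ` T"
    and e: "loop_edge R rmul rgen (lift a) l c'"
  shows "(\<exists>t\<in>T. loop_edge S mul g a l (Some t) \<and> c' = Some None)
    \<or> (\<exists>c. c \<notin> Some ` T \<and> loop_edge S mul g a l c \<and> c' = lift c)"
proof (cases l)
  case (Pair x positive)
  show ?thesis
  proof (cases positive)
    case True
    define c where "c = one_mul mul a (Some (g x))"
    have "loop_edge S mul g a l c" and "c' = lift c"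
      using a e Pair True by (simp_all add: c_def lift_mul_gen)
    then show ?thesis
      by (cases "c \<in> Some ` T") (auto simp: rees_map_def)
  next
    case False
    then have c': "c' \<in> one_carrier R" and a_eq: "lift a = one_mul rmul c' (Some (rgen x))"
      using e Pair by auto
    have "lift a \<noteq> Some None" using a(2) lift_eq_zero_iff by blast
    then have "c' \<noteq> Some None" using a_eq by auto
    with c' obtain c where c: "c \<in> one_carrier S" "c \<notin> Some ` T" "c' = lift c"
      by (rule lift_surj)
    have "lift a = lift (one_mul mul c (Some (g x)))"
      using a_eq c by (simp add: lift_mul_gen)
    with \<open>lift a \<noteq> Some None\<close> a(2) have "a = one_mul mul c (Some (g x))"
      by (metis lift_eq_zero_iff lift_inj)
    with c Pair False show ?thesis by auto
  qed
qed

lemma loop_path_from_nonzero: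
  assumes "a \<in> one_carrier S" "a \<notin> Some ` T" "loop_path R rmul rgen (lift a) w b'"
  shows "(\<exists>b. b \<notin> Some ` T \<and> loop_path S mul g a w b \<and> b' = lift b)
    \<or> (\<exists>u z t. w = u @ z \<and> t \<in> T \<and> loop_path S mul g a u (Some t)
        \<and> loop_path R rmul rgen (Some None) z b')"
  using assms
proof (induction w arbitrary: a)
  case Nil
  then show ?case by auto
next
  case (Cons l w)
  then obtain c' where e: "loop_edge R rmul rgen (lift a) l c'"
    and p: "loop_path R rmul rgen c' w b'" by auto
  from loop_edge_from_nonzero[OF Cons.prems(1,2) e] show ?case
  proof (elim disjE bexE conjE exE)
    fix t assume "t \<in> T" "loop_edge S mul g a l (Some t)" "c' = Some None"
    then have "loop_path S mul g a [l] (Some t)"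
      by (simp only: loop_path_single)
    with p \<open>t \<in> T\<close> \<open>c' = Some None\<close> show ?case
      by (metis append_Cons append_Nil)
  next
    fix c assume c: "c \<notin> Some ` T" "loop_edge S mul g a l c" "c' = lift c"
    then have "c \<in> one_carrier S" by (blast dest: loop_edge_ends)
    with Cons.IH c(1) p c(3)
    have "(\<exists>b. b \<notin> Some ` T \<and> loop_path S mul g c w b \<and> b' = lift b)
      \<or> (\<exists>u z t. w = u @ z \<and> t \<in> T \<and> loop_path S mul g c u (Some t)
          \<and> loop_path R rmul rgen (Some None) z b')"
      by blast
    then show ?case
    proof (elim disjE exE conjE)
      fix b assume "b \<notin> Some ` T" "loop_path S mul g c w b" "b' = lift b"
      with c(2) show ?case by auto
    next
      fix u z t assume "w = u @ z" "t \<in> T" "loop_path S mul g c u (Some t)"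
        and z: "loop_path R rmul rgen (Some None) z b'"
      with c(2) have "l # w = (l # u) @ z" "loop_path S mul g a (l # u) (Some t)"
        by auto
      with \<open>t \<in> T\<close> z show ?case
        by blast
    qed
  qed
qed

lemma loop_path_to_nonzero:
  assumes "b \<in> one_carrier S" "b \<notin> Some ` T" "loop_path R rmul rgen (Some None) w (lift b)"
  obtains u v t where "w = u @ v" "t \<in> T" "loop_path S mul g (Some t) v b"
proof -
  have "loop_path R rmul rgen (lift b) (inv_word w) (Some None)"
    using assms(3) by (simp add: rees.loop_path_inv_word)
  from loop_path_from_nonzero[OF assms(1,2) this] show ?thesis
  proof (elim disjE exE conjE)
    fix b' assume "b' \<notin> Some ` T" "Some None = lift b'"
    then show ?thesis by (metis lift_eq_zero_iff)
  next
    fix u z t assume "inv_word w = u @ z" "t \<in> T" "loop_path S mul g b u (Some t)"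
    then have "w = inv_word z @ inv_word u" "loop_path S mul g (Some t) (inv_word u) b"
      by (metis inv_word_simps(3,4), simp add: loop_path_inv_word)
    with \<open>t \<in> T\<close> show ?thesis using that by blast
  qed
qed

definition to_ideal where
  "to_ideal = {u. \<exists>t\<in>T. loop_path S mul g None u (Some t)}"

definition from_ideal where
  "from_ideal = {v. \<exists>t\<in>T. loop_path S mul g (Some t) v None}"

lemma rees_loop_problem_subset:
  "loop_problem R rmul rgen \<subseteq> loop_problem S mul g \<union> lang_conc (lang_conc to_ideal UNIV) from_ideal"
proof
  fix w assume "w \<in> loop_problem R rmul rgen"
  then have "loop_path R rmul rgen (lift None) w (lift None)"
    by (simp add: loop_problem_def)
  moreover have "None \<notin> Some ` T" by blast
  ultimately have "(\<exists>b. b \<notin> Some ` T \<and> loop_path S mul g None w b \<and> lift None = lift b)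
    \<or> (\<exists>u z t. w = u @ z \<and> t \<in> T \<and> loop_path S mul g None u (Some t)
        \<and> loop_path R rmul rgen (Some None) z (lift None))"
    using loop_path_from_nonzero[OF None_in_one_carrier] by blast
  then show "w \<in> loop_problem S mul g \<union> lang_conc (lang_conc to_ideal UNIV) from_ideal"
  proof (elim disjE exE conjE)
    fix b assume "b \<notin> Some ` T" "loop_path S mul g None w b" "lift None = lift b"
    then have "loop_path S mul g None w None"
      using lift_inj[of None b] by auto
    then show ?thesis by (simp add: loop_problem_def)
  next
    fix u z t assume w: "w = u @ z" and "t \<in> T" "loop_path S mul g None u (Some t)"
      and z: "loop_path R rmul rgen (Some None) z (lift None)"
    then have "u \<in> to_ideal" by (auto simp: to_ideal_def)
    obtain z1 z2 t' where "z = z1 @ z2" "t' \<in> T" "loop_path S mul g (Some t') z2 None"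
      using loop_path_to_nonzero[OF None_in_one_carrier _ z] by blast
    then have "w = (u @ z1) @ z2" "z2 \<in> from_ideal"
      using w by (auto simp: from_ideal_def)
    with \<open>u \<in> to_ideal\<close> show ?thesis
      unfolding lang_conc_def by blast
  qed
qed

lemma rees_loop_problem_supset:
  "loop_problem S mul g \<union> lang_conc (lang_conc to_ideal UNIV) from_ideal \<subseteq> loop_problem R rmul rgen"
proof
  fix w assume "w \<in> loop_problem S mul g \<union> lang_conc (lang_conc to_ideal UNIV) from_ideal"
  then show "w \<in> loop_problem R rmul rgen"
  proof
    assume "w \<in> loop_problem S mul g"
    then show ?thesis
      using loop_path_lift[of None w None] by (simp add: loop_problem_def)
  next
    assume "w \<in> lang_conc (lang_conc to_ideal UNIV) from_ideal"
    then obtain u z v t t' where w: "w = u @ z @ v" and "t \<in> T" "t' \<in> T"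
      and "loop_path S mul g None u (Some t)" "loop_path S mul g (Some t') v None"
      unfolding lang_conc_def to_ideal_def from_ideal_def by auto
    then have "loop_path R rmul rgen None u (Some None)" "loop_path R rmul rgen (Some None) v None"
      using loop_path_lift by (force simp: rees_map_def)+
    with loop_path_zero have "loop_path R rmul rgen None (u @ z @ v) None"
      by (meson rees.loop_path_append)
    with w show ?thesis
      by (simp add: loop_problem_def)
  qed
qed

theorem rees_loop_problem_eq:
  "loop_problem R rmul rgen = loop_problem S mul g \<union> lang_conc (lang_conc to_ideal UNIV) from_ideal"
  using rees_loop_problem_subset rees_loop_problem_supset by (rule equalityI)

definition represents_ideal where
  "represents_ideal V \<longleftrightarrow> (\<forall>k\<in>V. \<forall>b. loop_path S mul g None k b \<longrightarrow> b \<in> Some ` T)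
     \<and> (\<forall>t\<in>T. \<exists>k\<in>V. loop_path S mul g None k (Some t))"

lemma to_ideal_eq_rdiv:
  assumes V: "represents_ideal V"
  shows "to_ideal = rdiv (loop_problem S mul g) (inv_word ` V)"
proof (intro set_eqI iffI)
  fix u assume "u \<in> to_ideal"
  then obtain t where t: "t \<in> T" "loop_path S mul g None u (Some t)"
    by (auto simp: to_ideal_def)
  with V obtain k where "k \<in> V" "loop_path S mul g None k (Some t)"
    by (auto simp: represents_ideal_def)
  with t(2) have "loop_path S mul g None (u @ inv_word k) None"
    by (auto simp: loop_path_append loop_path_inv_word)
  with \<open>k \<in> V\<close> show "u \<in> rdiv (loop_problem S mul g) (inv_word ` V)"
    by (auto simp: rdiv_def loop_problem_def)
next
  fix u assume "u \<in> rdiv (loop_problem S mul g) (inv_word ` V)"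
  then obtain k b where "k \<in> V" "loop_path S mul g None u b" "loop_path S mul g b (inv_word k) None"
    by (auto simp: rdiv_def loop_problem_def loop_path_append)
  moreover from this V have "b \<in> Some ` T"
    by (auto simp: represents_ideal_def loop_path_inv_word)
  ultimately show "u \<in> to_ideal"
    by (auto simp: to_ideal_def)
qed

lemma from_ideal_eq_ldiv:
  assumes V: "represents_ideal V"
  shows "from_ideal = ldiv V (loop_problem S mul g)"
proof (intro set_eqI iffI)
  fix v assume "v \<in> from_ideal"
  then obtain t where t: "t \<in> T" "loop_path S mul g (Some t) v None"
    by (auto simp: from_ideal_def)
  with V obtain k where "k \<in> V" "loop_path S mul g None k (Some t)"
    by (auto simp: represents_ideal_def)
  with t(2) have "loop_path S mul g None (k @ v) None"
    by (auto simp: loop_path_append)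
  with \<open>k \<in> V\<close> show "v \<in> ldiv V (loop_problem S mul g)"
    by (auto simp: ldiv_def loop_problem_def)
next
  fix v assume "v \<in> ldiv V (loop_problem S mul g)"
  then obtain k b where "k \<in> V" "loop_path S mul g None k b" "loop_path S mul g b v None"
    by (auto simp: ldiv_def loop_problem_def loop_path_append)
  moreover from this V have "b \<in> Some ` T"
    by (auto simp: represents_ideal_def)
  ultimately show "v \<in> from_ideal"
    by (auto simp: from_ideal_def)
qed

lemma letter_in_ldiv_to_ideal:
  assumes V: "represents_ideal V" and "t \<in> T"
  shows "[l] \<in> ldiv V to_ideal"
proof -
  obtain x positive where l: "l = (x, positive)" by (cases l)
  have "t \<in> S" "mul t (g x) \<in> T"
    using \<open>t \<in> T\<close> ideal_subset gen_in_carrier ideal_mul_right by auto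
  then have "loop_path S mul g (Some t) [(x, True)] (Some (mul t (g x)))"
    "loop_path S mul g (Some (mul t (g x))) [(x, False)] (Some t)"
    by (simp_all add: loop_path_single one_carrier_def mul_closed gen_in_carrier)
  with \<open>t \<in> T\<close> \<open>mul t (g x) \<in> T\<close>
  have "\<exists>s\<in>T. \<exists>s'\<in>T. loop_path S mul g (Some s) [l] (Some s')"
    unfolding l by (cases positive) auto
  then obtain s s' where "s \<in> T" "s' \<in> T" and l_path: "loop_path S mul g (Some s) [l] (Some s')"
    by blast
  from V \<open>s \<in> T\<close> obtain k where "k \<in> V" "loop_path S mul g None k (Some s)"
    by (auto simp: represents_ideal_def)
  with l_path have "loop_path S mul g None (k @ [l]) (Some s')"
    using loop_path_append by blast
  with \<open>s' \<in> T\<close> have "k @ [l] \<in> to_ideal"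
    by (auto simp: to_ideal_def)
  with \<open>k \<in> V\<close> show ?thesis
    by (auto simp: ldiv_def)
qed

lemma rees_loop_problem_eq_divisions:
  assumes "represents_ideal V"
  defines "L \<equiv> loop_problem S mul g"
  shows "loop_problem R rmul rgen
    = L \<union> lang_conc (lang_conc (rdiv L (inv_word ` V)) (lang_star (ldiv V (rdiv L (inv_word ` V)))))
            (ldiv V L)"
proof -
  have "lang_conc to_ideal UNIV = lang_conc to_ideal (lang_star (ldiv V to_ideal))"
  proof (cases "T = {}")
    case True
    then have "to_ideal = {}"
      unfolding to_ideal_def by simp
    then show ?thesis by simp
  next
    case False
    then show ?thesis
      using letter_in_ldiv_to_ideal[OF assms(1)] lang_star_eq_UNIV by (metis ex_in_conv)
  qed
  then show ?thesis
    using rees_loop_problem_eq assms by (simp add: to_ideal_eq_rdiv from_ideal_eq_ldiv)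
qed

lemma rees_loop_problem_in_family:
  assumes "closed_rat_ops F" "closed_div_by P F" "loop_problem S mul g \<in> F"
    and "represents_ideal V" "P V" "P (inv_word ` V)"
  shows "loop_problem R rmul rgen \<in> F"
  using assms unfolding rees_loop_problem_eq_divisions[OF assms(4)] closed_rat_ops_def closed_div_by_def
  by blast

lemma represents_ideal_pos_word_image:
  assumes "Some ` T = (\<lambda>w. sigma1 mul g (r w)) ` W"
  shows "represents_ideal ((\<lambda>w. pos_word (r w)) ` W)"
proof -
  have "sigma1 mul g (r w) \<in> Some ` T" if "w \<in> W" for w
    using assms that by auto
  moreover have "\<exists>w\<in>W. Some t = sigma1 mul g (r w)" if "t \<in> T" for t
  proof -
    from that have "Some t \<in> (\<lambda>w. sigma1 mul g (r w)) ` W"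
      unfolding assms[symmetric] by blast
    then show ?thesis by blast
  qed
  ultimately show ?thesis
    by (auto simp: represents_ideal_def loop_path_pos_word_from_one)
qed

lemma finite_represents_ideal:
  assumes "finite T"
  obtains V where "represents_ideal V" "finite V" "finite (inv_word ` V)"
proof -
  define r where "r t = (SOME w. sigma1 mul g w = Some t)" for t
  have r: "sigma1 mul g (r t) = Some t" if "t \<in> T" for t
  proof -
    from that ideal_subset have "Some t \<in> one_carrier S"
      by (auto simp: one_carrier_def)
    then show ?thesis
      unfolding r_def by (rule someI_ex[OF sigma1_surj])
  qed
  then have "Some ` T = (\<lambda>t. sigma1 mul g (r t)) ` T"
    by (intro image_cong) simp_all
  then have "represents_ideal ((\<lambda>t. pos_word (r t)) ` T)"
    by (rule represents_ideal_pos_word_image)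
  moreover have "finite ((\<lambda>t. pos_word (r t)) ` T)"
    using assms by simp
  ultimately show ?thesis
    using that finite_imageI by blast
qed

lemma regular_represents_ideal:
  assumes "rational_subset S mul T"
  obtains V where "represents_ideal V" "regular V" "regular (inv_word ` V)"
proof -
  obtain A :: "nat set" and f L where f: "\<forall>a\<in>A. f a \<in> one_carrier S"
    and "L \<subseteq> lists A" "regular L"
    and T: "Some ` T = (\<lambda>w. foldr (\<lambda>a acc. one_mul mul (f a) acc) w None) ` L"
    using assms unfolding rational_subset_def by (elim exE conjE) (rule that)
  define r where "r a = (SOME w. sigma1 mul g w = f a)" for a
  have r: "sigma1 mul g (r a) = f a" if "a \<in> A" for a
  proof -
    from f that have "f a \<in> one_carrier S" by blast
    then show ?thesis
      unfolding r_def by (rule someI_ex[OF sigma1_surj])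
  qed
  have sigma1_concat_map:
    "sigma1 mul g (concat (map r w)) = foldr (\<lambda>a acc. one_mul mul (f a) acc) w None"
    if "w \<in> lists A" for w
    using that by (induction w) (simp_all add: sigma1_append r)
  have "Some ` T = (\<lambda>w. sigma1 mul g (concat (map r w))) ` L"
    unfolding T using \<open>L \<subseteq> lists A\<close> by (intro image_cong refl) (metis sigma1_concat_map subsetD)
  then have "represents_ideal ((\<lambda>w. pos_word (concat (map r w))) ` L)"
    by (rule represents_ideal_pos_word_image)
  moreover have "regular ((\<lambda>w. pos_word (concat (map r w))) ` L)"
    using \<open>regular L\<close> by (rule regular_image_morphism) (simp_all add: pos_word_def)
  ultimately show ?thesis
    using that regular_image_inv_word by blast
qed

end

theorem proposition3p1:
  fixes F :: "('x \<times> bool) list set set"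
    and S :: "'s set" and mul :: "'s \<Rightarrow> 's \<Rightarrow> 's" and g :: "'x \<Rightarrow> 's"
    and T :: "'s set"
  assumes "semigroup_on S mul"
    and "choice_of_generators S mul g"
    and "loop_problem S mul g \<in> F"
    and "semigroup_ideal S mul T"
  shows "(closed_rat_ops F \<and> closed_div_by finite F \<and> finite T
            \<longrightarrow> loop_problem (rees_carrier S T) (rees_mul mul T) (rees_gen T g) \<in> F)
       \<and> (closed_rat_ops F \<and> closed_div_by regular F \<and> rational_subset S mul T
            \<longrightarrow> loop_problem (rees_carrier S T) (rees_mul mul T) (rees_gen T g) \<in> F)"
proof -
  interpret rees_quotient S mul g T
    using assms(1,2,4) by unfold_locales
  have "loop_problem R rmul rgen \<in> F"
    if F: "closed_rat_ops F" "closed_div_by finite F" and "finite T"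
  proof -
    obtain V where "represents_ideal V" "finite V" "finite (inv_word ` V)"
      using finite_represents_ideal[OF \<open>finite T\<close>] .
    then show ?thesis
      by (rule rees_loop_problem_in_family[OF F assms(3)])
  qed
  moreover have "loop_problem R rmul rgen \<in> F"
    if F: "closed_rat_ops F" "closed_div_by regular F" and "rational_subset S mul T"
  proof -
    obtain V where "represents_ideal V" "regular V" "regular (inv_word ` V)"
      using regular_represents_ideal[OF \<open>rational_subset S mul T\<close>] .
    then show ?thesis
      by (rule rees_loop_problem_in_family[OF F assms(3)])
  qed
  ultimately show ?thesis
    by blast
qed

end
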